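(* Let $G$ be a finite-horizon two-player zero-sum sequential game and $\mathfrak J$ a regularized minimax objective under which $G$ has an equilibrium (and all best responses exist). Then the PuB-AMG of $G$ under the analog objective $\tilde{\mathfrak J}$ has a well-defined value, i.e. $\max_{\tilde\pi_0}\min_{\tilde\pi_1}\tilde{\mathfrak J}(\tilde\pi_0,\tilde\pi_1)=\min_{\tilde\pi_1}\max_{\tilde\pi_0}\tilde{\mathfrak J}(\tilde\pi_0,\tilde\pi_1)$, and this value equals the value $\max_{\pi_0}\min_{\pi_1}\mathfrak J(\pi_0,\pi_1)=\min_{\pi_1}\max_{\pi_0}\mathfrak J(\pi_0,\pi_1)$ of $G$.
   Context: A finite-horizon two-player zero-sum sequential game consists of: players $i\in\{0,1\}$; a finite action set $\mathbb{A}$; a set of histories $\mathbb{H}$, at each of which exactly one player $\iota$ acts; each history $h$ determines each player's action-observation history (AOH) $h_i\in\mathbb H_i$ (perfect recall) and a public history $h_{\text{pub}}$ (sequence of common-knowledge public observations); an initial history distribution $\mu$; a reward $\mathcal{R}:\mathbb{H}\times\mathbb{A}\to\mathbb{R}$ (player 0 gets $\mathcal R$, player 1 gets $-\mathcal R$); a transition function $\mathcal{T}:\mathbb{H}\times\mathbb{A}\to\Delta(\mathbb{H})$; a horizon $T$. $\mathbb{H}(h_{\text{pub}})$, $\mathbb{H}_i(h_{\text{pub}})$ denote histories/AOHs consistent with $h_{\text{pub}}$; $h_\iota$ is the acting player's AOH at $h$. A policy of $i$ is $\pi_i:\mathbb H_i\to\Delta(\mathbb A)$. A regularized minimax objective is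 $\mathfrak{J}(\pi_0,\pi_1)=\mathbb{E}[\sum_{t=0}^{T-1}\mathfrak{R}(H^t,A^t,\pi(H^t_\iota))\mid\pi_0,\pi_1]$ for some $\mathfrak R:\mathbb{H}\times\mathbb{A}\times\Delta(\mathbb A)\to\mathbb{R}$; player 0 maximizes, player 1 minimizes; an equilibrium is a saddle point. The PuB-AMG of $G$: states (PBSs) are $\tilde s\in\Delta(\mathbb{H}(h_{\text{pub}}))$ for public histories $h_{\text{pub}}$, initial state $\mu$; at $\tilde s$ the acting player chooses a public decision rule $\tilde a:\mathbb{H}_\iota(h_{\text{pub}})\to\Delta(\mathbb{A})$; the next PBS arises by sampling $H\sim\tilde s$, $A\sim\tilde a(H_\iota)$, a next history from $\mathcal T(H,A)$, observing its public observation $o$, and taking the posterior over next histories given $\tilde s,\tilde a,o$. The analog objective is $\tilde{\mathfrak J}(\tilde\pi_0,\tilde\pi_1)=\mathbb{E}[\sum_t\tilde{\mathfrak R}(\tilde S^t,\tilde A^t)\mid\tilde\pi_0,\tilde\pi_1]$ with $\tilde{\mathfrak R}(\tilde s,\tilde a)=\mathbb{E}_{H\sim\tilde s}\mathbb{E}_{A\sim\tilde a(H_\iota)}\mathfrak R(H,A,\tilde a(H_\iota))$, where a PuB-AMG policy $\tilde\pi_i$ maps PBSs where $i$ acts to decision rules. *)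

theory Defs
  imports "HOL-Probability.Probability"
begin

datatype player = P0 | P1

text \<open>A history is a trajectory: an initial node followed by the sequence of
  (action taken, resulting node) pairs.  Transitions of the game extend the
  trajectory, so action-observation histories (built from the trajectory) have
  perfect recall by construction.\<close>

type_synonym ('w,'a) hist = "'w \<times> ('a \<times> 'w) list"

record ('w,'a,'o,'q) sgame =
  init    :: "'w pmf"
  trans   :: "('w,'a) hist \<Rightarrow> 'a \<Rightarrow> 'w pmf"
  actor   :: "('w,'a) hist \<Rightarrow> player"
  obs     :: "player \<Rightarrow> ('w,'a) hist \<Rightarrow> 'o"
  pobs    :: "('w,'a) hist \<Rightarrow> 'q"
  reward  :: "('w,'a) hist \<Rightarrow> 'a \<Rightarrow> real"            \<comment> \<open>R (not used by the regularized objective)\<close>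
  horizon :: nat

definition hprefix :: "nat \<Rightarrow> ('w,'a) hist \<Rightarrow> ('w,'a) hist" where
  "hprefix k h = (fst h, take k (snd h))"

definition extend :: "('w,'a) hist \<Rightarrow> 'a \<Rightarrow> 'w \<Rightarrow> ('w,'a) hist" where
  "extend h a w = (fst h, snd h @ [(a, w)])"

type_synonym ('a,'o,'q) aoh = "('a option \<times> 'o \<times> 'q) list"

definition aoh :: "('w,'a,'o,'q) sgame \<Rightarrow> player \<Rightarrow> ('w,'a) hist \<Rightarrow> ('a,'o,'q) aoh" where
  "aoh G i h = map (\<lambda>k. (if k = 0 then None
                          else if actor G (hprefix (k - 1) h) = i then Some (fst (snd h ! (k - 1)))
                          else None,
                         obs G i (hprefix k h), pobs G (hprefix k h)))
                  [0..<Suc (length (snd h))]"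

definition pubhist :: "('w,'a,'o,'q) sgame \<Rightarrow> ('w,'a) hist \<Rightarrow> 'q list" where
  "pubhist G h = map (\<lambda>k. pobs G (hprefix k h)) [0..<Suc (length (snd h))]"

definition Tnext :: "('w,'a,'o,'q) sgame \<Rightarrow> ('w,'a) hist \<Rightarrow> 'a \<Rightarrow> ('w,'a) hist pmf" where
  "Tnext G h a = map_pmf (extend h a) (trans G h a)"

definition mu :: "('w,'a,'o,'q) sgame \<Rightarrow> ('w,'a) hist pmf" where
  "mu G = map_pmf (\<lambda>w. (w, [])) (init G)"

type_synonym ('a,'o,'q) policy = "('a,'o,'q) aoh \<Rightarrow> 'a pmf"

definition act :: "('w,'a,'o,'q) sgame \<Rightarrow> ('a,'o,'q) policy \<Rightarrow> ('a,'o,'q) policy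
                     \<Rightarrow> ('w,'a) hist \<Rightarrow> 'a pmf" where
  "act G p0 p1 h = (if actor G h = P0 then p0 else p1) (aoh G (actor G h) h)"

fun hdist :: "('w,'a,'o,'q) sgame \<Rightarrow> ('a,'o,'q) policy \<Rightarrow> ('a,'o,'q) policy
               \<Rightarrow> nat \<Rightarrow> ('w,'a) hist pmf" where
  "hdist G p0 p1 0 = mu G"
| "hdist G p0 p1 (Suc t) =
     bind_pmf (hdist G p0 p1 t) (\<lambda>h. bind_pmf (act G p0 p1 h) (\<lambda>a. Tnext G h a))"

definition Jobj :: "('w,'a,'o,'q) sgame \<Rightarrow> (('w,'a) hist \<Rightarrow> 'a \<Rightarrow> 'a pmf \<Rightarrow> real)
                     \<Rightarrow> ('a,'o,'q) policy \<Rightarrow> ('a,'o,'q) policy \<Rightarrow> real" where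
  "Jobj G r p0 p1 =
     (\<Sum>t<horizon G. measure_pmf.expectation (hdist G p0 p1 t)
        (\<lambda>h. measure_pmf.expectation (act G p0 p1 h) (\<lambda>a. r h a (act G p0 p1 h))))"

text \<open>PBSs are distributions over histories; a decision rule maps AOHs of the
  acting player to action distributions; a PuB-AMG policy maps PBSs to decision rules.\<close>

type_synonym ('w,'a,'o,'q) pubpolicy = "('w,'a) hist pmf \<Rightarrow> ('a,'o,'q) policy"

definition pbs_actor :: "('w,'a,'o,'q) sgame \<Rightarrow> ('w,'a) hist pmf \<Rightarrow> player" where
  "pbs_actor G s = actor G (SOME h. h \<in> set_pmf s)"

definition pbs_step :: "('w,'a,'o,'q) sgame \<Rightarrow> ('w,'a) hist pmf \<Rightarrow> ('a,'o,'q) policy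
                          \<Rightarrow> ('w,'a) hist pmf pmf" where
  "pbs_step G s d =
     (let joint = bind_pmf s (\<lambda>h. bind_pmf (d (aoh G (pbs_actor G s) h)) (\<lambda>a. Tnext G h a))
      in map_pmf (\<lambda>ob. cond_pmf joint {h'. pobs G h' = ob}) (map_pmf (pobs G) joint))"

definition pbs_choice :: "('w,'a,'o,'q) sgame \<Rightarrow> ('w,'a,'o,'q) pubpolicy \<Rightarrow> ('w,'a,'o,'q) pubpolicy
                            \<Rightarrow> ('w,'a) hist pmf \<Rightarrow> ('a,'o,'q) policy" where
  "pbs_choice G q0 q1 s = (if pbs_actor G s = P0 then q0 s else q1 s)"

fun pbs_dist :: "('w,'a,'o,'q) sgame \<Rightarrow> ('w,'a,'o,'q) pubpolicy \<Rightarrow> ('w,'a,'o,'q) pubpolicy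
                  \<Rightarrow> nat \<Rightarrow> ('w,'a) hist pmf pmf" where
  "pbs_dist G q0 q1 0 = return_pmf (mu G)"
| "pbs_dist G q0 q1 (Suc t) =
     bind_pmf (pbs_dist G q0 q1 t) (\<lambda>s. pbs_step G s (pbs_choice G q0 q1 s))"

definition pbs_reward :: "('w,'a,'o,'q) sgame \<Rightarrow> (('w,'a) hist \<Rightarrow> 'a \<Rightarrow> 'a pmf \<Rightarrow> real)
                          \<Rightarrow> ('w,'a) hist pmf \<Rightarrow> ('a,'o,'q) policy \<Rightarrow> real" where
  "pbs_reward G r s d =
     measure_pmf.expectation s (\<lambda>h.
       measure_pmf.expectation (d (aoh G (pbs_actor G s) h))
         (\<lambda>a. r h a (d (aoh G (pbs_actor G s) h))))"

definition Jpub :: "('w,'a,'o,'q) sgame \<Rightarrow> (('w,'a) hist \<Rightarrow> 'a \<Rightarrow> 'a pmf \<Rightarrow> real)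
                     \<Rightarrow> ('w,'a,'o,'q) pubpolicy \<Rightarrow> ('w,'a,'o,'q) pubpolicy \<Rightarrow> real" where
  "Jpub G r q0 q1 =
     (\<Sum>t<horizon G. measure_pmf.expectation (pbs_dist G q0 q1 t)
        (\<lambda>s. pbs_reward G r s (pbs_choice G q0 q1 s)))"

definition is_saddle :: "('x \<Rightarrow> 'y \<Rightarrow> real) \<Rightarrow> 'x \<Rightarrow> 'y \<Rightarrow> bool" where
  "is_saddle f x y \<longleftrightarrow> (\<forall>x' y'. f x' y \<le> f x y \<and> f x y \<le> f x y')"

text \<open>max_x min_y f = v (outer max attained; inner value as infimum) and
  min_y max_x f = v (outer min attained; inner value as supremum).\<close>

definition maxmin_value :: "('x \<Rightarrow> 'y \<Rightarrow> real) \<Rightarrow> real \<Rightarrow> bool" where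
  "maxmin_value f v \<longleftrightarrow>
     (SUP x. INF y. ereal (f x y)) = ereal v \<and> (\<exists>x. (INF y. ereal (f x y)) = ereal v)"

definition minmax_value :: "('x \<Rightarrow> 'y \<Rightarrow> real) \<Rightarrow> real \<Rightarrow> bool" where
  "minmax_value f v \<longleftrightarrow>
     (INF y. SUP x. ereal (f x y)) = ereal v \<and> (\<exists>y. (SUP x. ereal (f x y)) = ereal v)"

end

theory Submission
  imports Defs
begin

text \<open>A pair of PuB-AMG policies induces a pair of game policies: an action-observation
  history reveals its public history, which pins down the public belief state reached under
  the PuB-AMG policies, and the player plays the decision rule prescribed there.  Since the
  acting player is public and the public belief states reachable at time t are separated by
  public histories, the belief-state process is a coarse-graining of the history process
  under the induced policies, so the two objectives agree.  A policy that ignores the belief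
  state induces itself; hence a saddle point of the game, read as constant PuB-AMG policies,
  is a saddle point of the PuB-AMG with the same value.\<close>

lemma is_saddle_maxmin_value:
  assumes "is_saddle f x y"
  shows "maxmin_value f (f x y)"
proof -
  have le_x: "f x' y \<le> f x y" and le_y: "f x y \<le> f x y'" for x' y'
    using assms unfolding is_saddle_def by blast+
  have inner: "(INF y'. ereal (f x y')) = ereal (f x y)"
    by (rule antisym) (auto intro: INF_lower2[where i=y] INF_greatest simp: le_y)
  have "(SUP x'. INF y'. ereal (f x' y')) = ereal (f x y)"
  proof (rule antisym)
    show "(SUP x'. INF y'. ereal (f x' y')) \<le> ereal (f x y)"
      by (intro SUP_least INF_lower2[where i=y]) (simp_all add: le_x)
    show "ereal (f x y) \<le> (SUP x'. INF y'. ereal (f x' y'))"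
      unfolding inner[symmetric] by (rule SUP_upper) simp
  qed
  with inner show ?thesis
    unfolding maxmin_value_def by blast
qed

lemma is_saddle_minmax_value:
  assumes "is_saddle f x y"
  shows "minmax_value f (f x y)"
proof -
  have le_x: "f x' y \<le> f x y" and le_y: "f x y \<le> f x y'" for x' y'
    using assms unfolding is_saddle_def by blast+
  have inner: "(SUP x'. ereal (f x' y)) = ereal (f x y)"
    by (rule antisym) (auto intro: SUP_upper2[where i=x] SUP_least simp: le_x)
  have "(INF y'. SUP x'. ereal (f x' y')) = ereal (f x y)"
  proof (rule antisym)
    show "(INF y'. SUP x'. ereal (f x' y')) \<le> ereal (f x y)"
      unfolding inner[symmetric] by (rule INF_lower) simp
    show "ereal (f x y) \<le> (INF y'. SUP x'. ereal (f x' y'))"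
      by (intro INF_greatest SUP_upper2[where i=x]) (simp_all add: le_y)
  qed
  with inner show ?thesis
    unfolding minmax_value_def by blast
qed

lemma is_saddle_reduction:
  assumes reduce: "\<And>x y. f x y = g (\<sigma> x y) (\<tau> x y)"
    and fst_const: "\<And>y. \<sigma> x\<^sub>0 y = p"
    and snd_const: "\<And>x. \<tau> x y\<^sub>0 = q"
    and saddle: "is_saddle g p q"
  shows "is_saddle f x\<^sub>0 y\<^sub>0"
  using saddle unfolding is_saddle_def reduce fst_const snd_const by blast

lemma expectation_bind_pmf_finite_support:
  fixes g :: "'b \<Rightarrow> real"
  assumes fin: "finite (set_pmf (bind_pmf p f))"
  shows "measure_pmf.expectation (bind_pmf p f) g
           = measure_pmf.expectation p (\<lambda>x. measure_pmf.expectation (f x) g)"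
proof -
  define B where "B = set_pmf (bind_pmf p f)"
  define g' where "g' y = (if y \<in> B then g y else 0)" for y
  have bound: "\<bar>g' y\<bar> \<le> (\<Sum>b\<in>B. \<bar>g b\<bar>)" for y
    using fin by (auto simp: g'_def B_def intro: member_le_sum)
  have "measure_pmf.expectation (bind_pmf p f) g = measure_pmf.expectation (bind_pmf p f) g'"
    by (intro integral_cong_AE) (auto simp: AE_measure_pmf_iff g'_def B_def)
  also have "\<dots> = measure_pmf.expectation p (\<lambda>x. measure_pmf.expectation (f x) g')"
    unfolding measure_pmf_bind
    by (rule integral_bind[where K="count_space UNIV" and B'=1, OF _ bound])
       (auto simp: measure_subprob)
  also have "\<dots> = measure_pmf.expectation p (\<lambda>x. measure_pmf.expectation (f x) g)"
    by (intro integral_cong_AE) (auto simp: AE_measure_pmf_iff g'_def B_def intro!: integral_cong_AE)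
  finally show ?thesis .
qed

lemma bind_cond_pmf_fibre: "bind_pmf p (\<lambda>x. cond_pmf p {y. f y = f x}) = p"
  by (rule bind_cond_pmf_cancel) (auto intro!: arg_cong2[where f=measure])

lemma pubhist_extend: "pubhist G (extend h a w) = pubhist G h @ [pobs G (extend h a w)]"
proof -
  have "hprefix k (extend h a w) = hprefix k h" if "k \<le> length (snd h)" for k
    using that by (simp add: hprefix_def extend_def)
  moreover have "hprefix (Suc (length (snd h))) (extend h a w) = extend h a w"
    by (simp add: hprefix_def extend_def)
  ultimately show ?thesis
    by (simp add: pubhist_def extend_def del: upt_Suc add: upt_Suc_append)
qed

lemma pubhist_eq_map_aoh: "pubhist G h = map (\<lambda>x. snd (snd x)) (aoh G i h)"
  by (simp add: pubhist_def aoh_def)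

definition pbs_next_hist :: "('w,'a,'o,'q) sgame \<Rightarrow> ('w,'a) hist pmf \<Rightarrow> ('a,'o,'q) policy
                               \<Rightarrow> ('w,'a) hist pmf" where
  "pbs_next_hist G s d = bind_pmf s (\<lambda>h. bind_pmf (d (aoh G (pbs_actor G s) h)) (Tnext G h))"

lemma pbs_step_eq_cond_pmf:
  "pbs_step G s d = map_pmf (\<lambda>ob. cond_pmf (pbs_next_hist G s d) {h. pobs G h = ob})
                             (map_pmf (pobs G) (pbs_next_hist G s d))"
  by (simp add: pbs_step_def pbs_next_hist_def Let_def)

lemma bind_pbs_step: "bind_pmf (pbs_step G s d) id = pbs_next_hist G s d"
  by (simp add: pbs_step_eq_cond_pmf bind_map_pmf bind_cond_pmf_fibre)

lemma set_pbs_next_hist: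
  "h' \<in> set_pmf (pbs_next_hist G s d) \<Longrightarrow> \<exists>h\<in>set_pmf s. \<exists>a w. h' = extend h a w"
  by (auto simp: pbs_next_hist_def Tnext_def)

lemma set_pbs_dist_SucE:
  assumes "s' \<in> set_pmf (pbs_dist G q0 q1 (Suc t))"
  obtains s ob where "s \<in> set_pmf (pbs_dist G q0 q1 t)"
    and "s' = cond_pmf (pbs_next_hist G s (pbs_choice G q0 q1 s)) {h. pobs G h = ob}"
    and "\<And>h'. h' \<in> set_pmf s' \<Longrightarrow>
           \<exists>h\<in>set_pmf s. \<exists>a w. h' = extend h a w \<and> pubhist G h' = pubhist G h @ [ob]"
proof -
  obtain s h' where s: "s \<in> set_pmf (pbs_dist G q0 q1 t)"
    and h': "h' \<in> set_pmf (pbs_next_hist G s (pbs_choice G q0 q1 s))"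
    and s': "s' = cond_pmf (pbs_next_hist G s (pbs_choice G q0 q1 s)) {h. pobs G h = pobs G h'}"
    using assms by (auto simp: pbs_step_eq_cond_pmf)
  have set_s': "set_pmf s' = set_pmf (pbs_next_hist G s (pbs_choice G q0 q1 s)) \<inter> {h. pobs G h = pobs G h'}"
    unfolding s' using h' by (intro set_cond_pmf) auto
  show ?thesis
  proof (rule that[OF s s'])
    fix h1
    assume "h1 \<in> set_pmf s'"
    then have "h1 \<in> set_pmf (pbs_next_hist G s (pbs_choice G q0 q1 s))" and "pobs G h1 = pobs G h'"
      unfolding set_s' by simp_all
    moreover from this(1) obtain h a w where "h \<in> set_pmf s" "h1 = extend h a w"
      using set_pbs_next_hist by blast
    ultimately show "\<exists>h\<in>set_pmf s. \<exists>a w. h1 = extend h a w \<and> pubhist G h1 = pubhist G h @ [pobs G h']"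
      using pubhist_extend[of G h a w] by auto
  qed
qed

lemma length_hist_pbs_dist:
  "s \<in> set_pmf (pbs_dist G q0 q1 t) \<Longrightarrow> h \<in> set_pmf s \<Longrightarrow> length (snd h) = t"
proof (induction t arbitrary: s h)
  case (0 s h)
  then show ?case by (auto simp: mu_def)
next
  case (Suc t s h)
  obtain u ob where u: "u \<in> set_pmf (pbs_dist G q0 q1 t)"
    and "s = cond_pmf (pbs_next_hist G u (pbs_choice G q0 q1 u)) {h. pobs G h = ob}"
    and ext: "\<And>h1. h1 \<in> set_pmf s \<Longrightarrow>
                \<exists>g\<in>set_pmf u. \<exists>a w. h1 = extend g a w \<and> pubhist G h1 = pubhist G g @ [ob]"
    using Suc.prems(1) by (rule set_pbs_dist_SucE) blast
  from ext obtain g a w where "g \<in> set_pmf u" "h = extend g a w"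
    using Suc.prems(2) by blast
  with Suc.IH[OF u] show ?case
    by (simp add: extend_def)
qed

lemma finite_set_join_pbs_dist:
  fixes G :: "('w::finite, 'a::finite, 'o, 'q) sgame"
  shows "finite (set_pmf (bind_pmf (pbs_dist G q0 q1 t) id))"
proof (rule finite_subset)
  show "set_pmf (bind_pmf (pbs_dist G q0 q1 t) id) \<subseteq> (UNIV :: 'w set) \<times> {xs. length xs = t}"
    using length_hist_pbs_dist by fastforce
  show "finite ((UNIV :: 'w set) \<times> {xs :: ('a \<times> 'w) list. length xs = t})"
    by (simp add: finite_list_length)
qed

text \<open>The public components of an AOH of length t + 1 form the public history of the time-t
  histories consistent with it.  For AOHs not reachable under (q0, q1) the choice is
  unconstrained, so reached_pbs is junk there.\<close>

definition reached_pbs :: "('w,'a,'o,'q) sgame \<Rightarrow> ('w,'a,'o,'q) pubpolicy \<Rightarrow> ('w,'a,'o,'q) pubpolicy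
                             \<Rightarrow> ('a,'o,'q) aoh \<Rightarrow> ('w,'a) hist pmf" where
  "reached_pbs G q0 q1 x = (SOME s. s \<in> set_pmf (pbs_dist G q0 q1 (length x - 1)) \<and>
                                    (\<exists>h\<in>set_pmf s. pubhist G h = map (\<lambda>y. snd (snd y)) x))"

definition induced_policy :: "('w,'a,'o,'q) sgame \<Rightarrow> ('w,'a,'o,'q) pubpolicy \<Rightarrow> ('w,'a,'o,'q) pubpolicy
                                \<Rightarrow> ('w,'a,'o,'q) pubpolicy \<Rightarrow> ('a,'o,'q) policy" where
  "induced_policy G q0 q1 q x = q (reached_pbs G q0 q1 x) x"

lemma induced_policy_const: "induced_policy G q0 q1 (\<lambda>_. p) = p"
  by (rule ext) (simp add: induced_policy_def)

context
  fixes G :: "('w,'a,'o,'q) sgame"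
  assumes init_public: "\<forall>h\<in>set_pmf (mu G). \<forall>h'\<in>set_pmf (mu G). pubhist G h = pubhist G h'"
begin

lemma pubhist_eq_iff_pbs_eq:
  assumes "s \<in> set_pmf (pbs_dist G q0 q1 t)" "s' \<in> set_pmf (pbs_dist G q0 q1 t)"
    and "h \<in> set_pmf s" "h' \<in> set_pmf s'"
  shows "pubhist G h = pubhist G h' \<longleftrightarrow> s = s'"
  using assms
proof (induction t arbitrary: s s' h h')
  case (0 s s' h h')
  then have "h \<in> set_pmf (mu G)" "h' \<in> set_pmf (mu G)" "s = s'"
    by simp_all
  then show ?case
    using init_public by blast
next
  case (Suc t s s' h h')
  obtain u ob where u: "u \<in> set_pmf (pbs_dist G q0 q1 t)"
    and s: "s = cond_pmf (pbs_next_hist G u (pbs_choice G q0 q1 u)) {h. pobs G h = ob}"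
    and ext: "\<And>h1. h1 \<in> set_pmf s \<Longrightarrow>
                \<exists>g\<in>set_pmf u. \<exists>a w. h1 = extend g a w \<and> pubhist G h1 = pubhist G g @ [ob]"
    using Suc.prems(1) by (rule set_pbs_dist_SucE) blast
  obtain u' ob' where u': "u' \<in> set_pmf (pbs_dist G q0 q1 t)"
    and s': "s' = cond_pmf (pbs_next_hist G u' (pbs_choice G q0 q1 u')) {h. pobs G h = ob'}"
    and ext': "\<And>h1. h1 \<in> set_pmf s' \<Longrightarrow>
                 \<exists>g\<in>set_pmf u'. \<exists>a w. h1 = extend g a w \<and> pubhist G h1 = pubhist G g @ [ob']"
    using Suc.prems(2) by (rule set_pbs_dist_SucE) blast
  obtain g where g: "g \<in> set_pmf u" "pubhist G h = pubhist G g @ [ob]"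
    using ext[OF Suc.prems(3)] by blast
  show ?case
  proof
    obtain g' where g': "g' \<in> set_pmf u'" "pubhist G h' = pubhist G g' @ [ob']"
      using ext'[OF Suc.prems(4)] by blast
    assume "pubhist G h = pubhist G h'"
    with g g' have "pubhist G g = pubhist G g'" and "ob = ob'"
      by simp_all
    moreover from this(1) have "u = u'"
      using Suc.IH[OF u u' g(1) g'(1)] by blast
    ultimately show "s = s'" using s s' by simp
  next
    assume "s = s'"
    obtain g' where g': "g' \<in> set_pmf u" "pubhist G h' = pubhist G g' @ [ob]"
      using ext[OF Suc.prems(4)[folded \<open>s = s'\<close>]] by blast
    have "pubhist G g = pubhist G g'"
      using Suc.IH[OF u u g(1) g'(1)] by blast
    with g g' show "pubhist G h = pubhist G h'" by simp
  qed
qed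

lemma reached_pbs_aoh:
  assumes s: "s \<in> set_pmf (pbs_dist G q0 q1 t)" and h: "h \<in> set_pmf s"
  shows "reached_pbs G q0 q1 (aoh G i h) = s"
proof -
  have time: "length (aoh G i h) - 1 = t"
    using length_hist_pbs_dist[OF s h] by (simp add: aoh_def)
  show ?thesis
    unfolding reached_pbs_def time pubhist_eq_map_aoh[of G h i, symmetric]
  proof (rule some_equality)
    show "s \<in> set_pmf (pbs_dist G q0 q1 t) \<and> (\<exists>h'\<in>set_pmf s. pubhist G h' = pubhist G h)"
      using s h by blast
  next
    fix s'
    assume "s' \<in> set_pmf (pbs_dist G q0 q1 t) \<and> (\<exists>h'\<in>set_pmf s'. pubhist G h' = pubhist G h)"
    then show "s' = s"
      using pubhist_eq_iff_pbs_eq[OF _ s _ h] by blast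
  qed
qed

context
  assumes actor_public: "\<forall>h h'. pubhist G h = pubhist G h' \<longrightarrow> actor G h = actor G h'"
begin

lemma pbs_actor_eq_actor:
  assumes s: "s \<in> set_pmf (pbs_dist G q0 q1 t)" and h: "h \<in> set_pmf s"
  shows "pbs_actor G s = actor G h"
proof -
  have "(SOME h'. h' \<in> set_pmf s) \<in> set_pmf s"
    using h by (rule someI)
  then show ?thesis
    unfolding pbs_actor_def using actor_public pubhist_eq_iff_pbs_eq[OF s s _ h] by blast
qed

lemma act_induced_policy:
  assumes "s \<in> set_pmf (pbs_dist G q0 q1 t)" and "h \<in> set_pmf s"
  shows "act G (induced_policy G q0 q1 q0) (induced_policy G q0 q1 q1) h
           = pbs_choice G q0 q1 s (aoh G (pbs_actor G s) h)"
  using assms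
  by (simp add: act_def pbs_choice_def induced_policy_def reached_pbs_aoh pbs_actor_eq_actor)

lemma hdist_induced_policy:
  "hdist G (induced_policy G q0 q1 q0) (induced_policy G q0 q1 q1) t = bind_pmf (pbs_dist G q0 q1 t) id"
proof (induction t)
  case 0
  then show ?case by (simp add: bind_return_pmf)
next
  case (Suc t)
  define K where
    "K = (\<lambda>h. bind_pmf (act G (induced_policy G q0 q1 q0) (induced_policy G q0 q1 q1) h) (Tnext G h))"
  have "hdist G (induced_policy G q0 q1 q0) (induced_policy G q0 q1 q1) (Suc t)
          = bind_pmf (pbs_dist G q0 q1 t) (\<lambda>s. bind_pmf s K)"
    using Suc.IH by (simp add: K_def bind_assoc_pmf)
  also have "\<dots> = bind_pmf (pbs_dist G q0 q1 t) (\<lambda>s. bind_pmf (pbs_step G s (pbs_choice G q0 q1 s)) id)"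
    unfolding bind_pbs_step pbs_next_hist_def K_def
    by (intro bind_pmf_cong refl) (simp add: act_induced_policy)
  also have "\<dots> = bind_pmf (pbs_dist G q0 q1 (Suc t)) id"
    by (simp add: bind_assoc_pmf)
  finally show ?case .
qed

end

end

lemma Jpub_eq_Jobj_induced_policy:
  fixes G :: "('w::finite, 'a::finite, 'o, 'q) sgame"
  assumes init_public: "\<forall>h\<in>set_pmf (mu G). \<forall>h'\<in>set_pmf (mu G). pubhist G h = pubhist G h'"
    and actor_public: "\<forall>h h'. pubhist G h = pubhist G h' \<longrightarrow> actor G h = actor G h'"
  shows "Jpub G r q0 q1 = Jobj G r (induced_policy G q0 q1 q0) (induced_policy G q0 q1 q1)"
  unfolding Jpub_def Jobj_def
proof (rule sum.cong[OF refl])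
  fix t
  define p0 where "p0 = induced_policy G q0 q1 q0"
  define p1 where "p1 = induced_policy G q0 q1 q1"
  define g where "g h = measure_pmf.expectation (act G p0 p1 h) (\<lambda>a. r h a (act G p0 p1 h))" for h
  have "measure_pmf.expectation (pbs_dist G q0 q1 t) (\<lambda>s. pbs_reward G r s (pbs_choice G q0 q1 s))
          = measure_pmf.expectation (pbs_dist G q0 q1 t) (\<lambda>s. measure_pmf.expectation s g)"
    unfolding pbs_reward_def g_def p0_def p1_def
    by (intro integral_cong_AE)
       (auto simp: AE_measure_pmf_iff act_induced_policy[OF init_public actor_public]
             intro!: integral_cong_AE)
  also have "\<dots> = measure_pmf.expectation (bind_pmf (pbs_dist G q0 q1 t) id) g"
    by (simp add: expectation_bind_pmf_finite_support[OF finite_set_join_pbs_dist])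
  also have "\<dots> = measure_pmf.expectation (hdist G p0 p1 t) g"
    unfolding p0_def p1_def hdist_induced_policy[OF init_public actor_public] ..
  finally show "measure_pmf.expectation (pbs_dist G q0 q1 t) (\<lambda>s. pbs_reward G r s (pbs_choice G q0 q1 s))
      = measure_pmf.expectation (hdist G p0 p1 t) g" .
qed

theorem corollaryB3:
  fixes G :: "('w::finite, 'a::finite, 'o, 'q) sgame"
    and r :: "('w,'a) hist \<Rightarrow> 'a \<Rightarrow> 'a pmf \<Rightarrow> real"
  assumes actor_public: "\<forall>h h'. pubhist G h = pubhist G h' \<longrightarrow> actor G h = actor G h'"
    and init_public: "\<forall>h\<in>set_pmf (mu G). \<forall>h'\<in>set_pmf (mu G). pubhist G h = pubhist G h'"
    and equilibrium: "\<exists>p0 p1. is_saddle (Jobj G r) p0 p1"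
    and br0: "\<forall>p1. \<exists>p0. \<forall>p0'. Jobj G r p0' p1 \<le> Jobj G r p0 p1"
    and br1: "\<forall>p0. \<exists>p1. \<forall>p1'. Jobj G r p0 p1 \<le> Jobj G r p0 p1'"
  shows "\<exists>v. maxmin_value (Jobj G r) v \<and> minmax_value (Jobj G r) v
           \<and> maxmin_value (Jpub G r) v \<and> minmax_value (Jpub G r) v"
proof -
  obtain p0 p1 where saddle: "is_saddle (Jobj G r) p0 p1"
    using equilibrium by blast
  note reduce = Jpub_eq_Jobj_induced_policy[OF init_public actor_public]
  have "is_saddle (Jpub G r) (\<lambda>_. p0) (\<lambda>_. p1)"
    by (rule is_saddle_reduction[where \<sigma>="\<lambda>q0 q1. induced_policy G q0 q1 q0"
                                     and \<tau>="\<lambda>q0 q1. induced_policy G q0 q1 q1", OF reduce _ _ saddle])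
       (simp_all add: induced_policy_const)
  moreover have "Jpub G r (\<lambda>_. p0) (\<lambda>_. p1) = Jobj G r p0 p1"
    by (simp add: reduce induced_policy_const)
  ultimately show ?thesis
    using saddle is_saddle_maxmin_value is_saddle_minmax_value by metis
qed

end
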